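(* For each $t\ge 0$, the set of simplices of $\mathrm{VR}_t(\mathcal X,d_\theta)$ that meet both $\mathcal C$ and $\mathcal Y^\circ$ is exactly \[ \bigcup_{u,v\ge 0,\ \|(u,v)\|_{\ell^p}\le t}\Bigl(\mathrm{VR}_t(\mathcal C^{\le u})\star \mathrm{VR}_t(\mathcal Y^{\le v})\Bigr). \] In particular, when $p=\infty$, \[ \mathrm{VR}_t(\mathcal X,d_\theta)=\mathrm{VR}_t(\mathcal C,\beta)\cup \mathrm{VR}_t(\mathcal Y^\circ,d_{\mathrm{reg}})\cup\Bigl(\mathrm{VR}_t(\mathcal C^{\le t})\star \mathrm{VR}_t(\mathcal Y^{\le t})\Bigr). \]
   Context: Let $A$ be a unital $C^*$-algebra, $H$ a Hilbert space, $\mathcal X=\mathrm{CB}(A,B(H))$, $\mathcal C=\mathrm{CP}(A,B(H))$ with Bures distance $\beta$. Fix $\theta\in\mathcal C$, $\lambda>0$, $\alpha\in(0,1]$, $p\in[1,\infty]$, and let $d_\theta=\beta^{BK}_{\theta,\lambda,p,\alpha}$ be the Bures--Kuratowski metric. Let $\mathcal Y=(\mathcal X\setminus\mathcal C)\sqcup\{\ast\}$ with metric $d_{\mathrm{reg}}$ ($=\lambda\delta_{\mathrm{reg}}^\alpha$ on non-CP pairs and $\lambda\delta_{\mathrm{reg}}(\cdot,0)^\alpha$ to $\ast$, $\delta_{\mathrm{reg}}$ the regular-representation metric), $\mathcal Y^\circ=\mathcal Y\setminus\{\ast\}$. Then $d_\theta=\beta$ on $\mathcal C$, $d_\theta=d_{\mathrm{reg}}$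 on $\mathcal Y^\circ$, and $d_\theta(x,y)=\|(r_{\mathcal C}(x),r_{\mathcal Y}(y))\|_{\ell^p}$ for $x\in\mathcal C$, $y\in\mathcal Y$, with $r_{\mathcal C}(x)=\beta(x,\theta)$, $r_{\mathcal Y}(y)=d_{\mathrm{reg}}(y,\ast)$. $\mathrm{VR}_t(Z,d)$ is the Vietoris--Rips complex (finite subsets of diameter $\le t$). $\mathcal C^{\le u}=\{x\in\mathcal C: r_{\mathcal C}(x)\le u\}$, $\mathcal Y^{\le v}=\{y\in\mathcal Y^\circ: r_{\mathcal Y}(y)\le v\}$; $\mathrm{VR}_t(\mathcal C^{\le u})$ and $\mathrm{VR}_t(\mathcal Y^{\le v})$ are the induced subcomplexes of $\mathrm{VR}_t(\mathcal C,\beta)$ and $\mathrm{VR}_t(\mathcal Y^\circ,d_{\mathrm{reg}})$ on these vertex sets. For complexes $K,L$ on disjoint vertex sets, $K\star L=\{\sigma\cup\tau:\sigma\in K,\tau\in L,\sigma\ne\varnothing,\tau\neq\varnothing\}$. *)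

theory Defs
  imports "HOL-Analysis.Analysis" "HOL-Library.Extended_Real"
begin

text \<open>The ambient space X = CB(A,B(H)) is modelled by the universe
  of a type 'a; the CP cone is a subset C. The pointed space Y = (X - C) + {*} is modelled
  via 'a option with None = *, restricted to Some ` (- C) \<union> {None}.\<close>

definition metric_on :: "'b set \<Rightarrow> ('b \<Rightarrow> 'b \<Rightarrow> real) \<Rightarrow> bool" where
  "metric_on S d \<longleftrightarrow>
     (\<forall>x\<in>S. \<forall>y\<in>S. 0 \<le> d x y \<and> (d x y = 0 \<longleftrightarrow> x = y) \<and> d x y = d y x) \<and>
     (\<forall>x\<in>S. \<forall>y\<in>S. \<forall>z\<in>S. d x z \<le> d x y + d y z)"

definition lp_norm2 :: "ereal \<Rightarrow> real \<Rightarrow> real \<Rightarrow> real" where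
  "lp_norm2 p a b =
     (if p = \<infinity> then max \<bar>a\<bar> \<bar>b\<bar>
      else (\<bar>a\<bar> powr real_of_ereal p + \<bar>b\<bar> powr real_of_ereal p) powr (1 / real_of_ereal p))"

definition VR :: "real \<Rightarrow> 'b set \<Rightarrow> ('b \<Rightarrow> 'b \<Rightarrow> real) \<Rightarrow> 'b set set" where
  "VR t S d = {\<sigma>. finite \<sigma> \<and> \<sigma> \<noteq> {} \<and> \<sigma> \<subseteq> S \<and> (\<forall>x\<in>\<sigma>. \<forall>y\<in>\<sigma>. d x y \<le> t)}"

definition join :: "'b set set \<Rightarrow> 'b set set \<Rightarrow> 'b set set" where
  "join K L = {\<sigma> \<union> \<tau> | \<sigma> \<tau>. \<sigma> \<in> K \<and> \<tau> \<in> L \<and> \<sigma> \<noteq> {} \<and> \<tau> \<noteq> {}}"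

end

theory Submission
  imports Defs
begin

text \<open>A finite simplex meeting both C and its complement is the union of \<open>\<sigma> \<inter> C\<close> and
  \<open>\<sigma> - C\<close>, and diameter \<open>\<le> t\<close> on each part is the Vietoris--Rips condition for \<open>\<beta>\<close> resp. the
  regular-representation metric. The cross distance \<open>\<parallel>(\<beta>(x,\<theta>), d\<^sub>r\<^sub>e\<^sub>g(y,*))\<parallel>\<^sub>p\<close> is monotone in
  the two radii, so all cross distances are \<open>\<le> t\<close> exactly when \<open>\<parallel>(u,v)\<parallel>\<^sub>p \<le> t\<close> for the largest
  radii u, v attained on the two parts. For \<open>p = \<infinity>\<close> this condition reads \<open>u, v \<le> t\<close>, so the
  union collapses to its largest member \<open>u = v = t\<close>.\<close>

lemma lp_norm2_mono:
  assumes p: "1 \<le> p" and "\<bar>a\<bar> \<le> u" and "\<bar>b\<bar> \<le> v"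
  shows "lp_norm2 p a b \<le> lp_norm2 p u v"
proof (cases "p = \<infinity>")
  case True
  then show ?thesis using assms by (auto simp: lp_norm2_def)
next
  case False
  then obtain r where r: "p = ereal r" and r1: "1 \<le> r" using p by (cases p) auto
  have "\<bar>a\<bar> powr r + \<bar>b\<bar> powr r \<le> \<bar>u\<bar> powr r + \<bar>v\<bar> powr r"
    using assms r1 by (intro add_mono powr_mono2) auto
  then have "(\<bar>a\<bar> powr r + \<bar>b\<bar> powr r) powr (1/r) \<le> (\<bar>u\<bar> powr r + \<bar>v\<bar> powr r) powr (1/r)"
    using r1 by (intro powr_mono2) auto
  then show ?thesis using r by (simp add: lp_norm2_def)
qed

lemma lp_norm2_infinity_le_iff: "lp_norm2 \<infinity> a b \<le> t \<longleftrightarrow> \<bar>a\<bar> \<le> t \<and> \<bar>b\<bar> \<le> t"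
  by (simp add: lp_norm2_def)

lemma VR_mono: "S \<subseteq> T \<Longrightarrow> VR t S d \<subseteq> VR t T d"
  unfolding VR_def by blast

lemma join_mono: "K \<subseteq> K' \<Longrightarrow> L \<subseteq> L' \<Longrightarrow> join K L \<subseteq> join K' L'"
  unfolding join_def by blast

lemma VR_cong:
  assumes "\<sigma> \<subseteq> S" "\<sigma> \<subseteq> T" and "\<And>x y. x \<in> \<sigma> \<Longrightarrow> y \<in> \<sigma> \<Longrightarrow> d x y = e x y"
  shows "\<sigma> \<in> VR t S d \<longleftrightarrow> \<sigma> \<in> VR t T e"
proof -
  have "(\<forall>x\<in>\<sigma>. \<forall>y\<in>\<sigma>. d x y \<le> t) \<longleftrightarrow> (\<forall>x\<in>\<sigma>. \<forall>y\<in>\<sigma>. e x y \<le> t)"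
    using assms(3) by simp
  with assms(1,2) show ?thesis
    unfolding VR_def by blast
qed

lemma VR_UNIV_split:
  assumes "\<And>x y. x \<in> C \<Longrightarrow> y \<in> C \<Longrightarrow> d x y = dC x y"
    and "\<And>x y. x \<notin> C \<Longrightarrow> y \<notin> C \<Longrightarrow> d x y = dY x y"
  shows "VR t UNIV d =
           VR t C dC \<union> VR t (- C) dY \<union> {\<sigma> \<in> VR t UNIV d. \<sigma> \<inter> C \<noteq> {} \<and> \<sigma> - C \<noteq> {}}"
proof -
  have on_C: "\<sigma> \<in> VR t UNIV d \<longleftrightarrow> \<sigma> \<in> VR t C dC" if "\<sigma> \<subseteq> C" for \<sigma>
    using that assms(1) by (intro VR_cong) auto
  have off_C: "\<sigma> \<in> VR t UNIV d \<longleftrightarrow> \<sigma> \<in> VR t (- C) dY" if "\<sigma> \<subseteq> - C" for \<sigma>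
    using that assms(2) by (intro VR_cong) auto
  show ?thesis
  proof (intro equalityI subsetI)
    fix \<sigma> assume "\<sigma> \<in> VR t UNIV d"
    then consider "\<sigma> \<in> VR t C dC" | "\<sigma> \<in> VR t (- C) dY"
      | "\<sigma> \<in> VR t UNIV d" "\<sigma> \<inter> C \<noteq> {}" "\<sigma> - C \<noteq> {}"
      using on_C off_C by blast
    then show "\<sigma> \<in> VR t C dC \<union> VR t (- C) dY \<union> {\<sigma> \<in> VR t UNIV d. \<sigma> \<inter> C \<noteq> {} \<and> \<sigma> - C \<noteq> {}}"
      by cases auto
  next
    fix \<sigma> assume "\<sigma> \<in> VR t C dC \<union> VR t (- C) dY \<union> {\<sigma> \<in> VR t UNIV d. \<sigma> \<inter> C \<noteq> {} \<and> \<sigma> - C \<noteq> {}}"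
    moreover have "\<sigma> \<subseteq> S" if "\<sigma> \<in> VR t S e" for S e
      using that unfolding VR_def by blast
    ultimately show "\<sigma> \<in> VR t UNIV d"
      using on_C off_C by blast
  qed
qed

locale glued_distance =
  fixes C :: "'a set" and d dC dY :: "'a \<Rightarrow> 'a \<Rightarrow> real"
    and r s :: "'a \<Rightarrow> real" and N :: "real \<Rightarrow> real \<Rightarrow> real"
  assumes d_sym: "d x y = d y x"
    and d_C: "x \<in> C \<Longrightarrow> y \<in> C \<Longrightarrow> d x y = dC x y"
    and d_Y: "x \<notin> C \<Longrightarrow> y \<notin> C \<Longrightarrow> d x y = dY x y"
    and d_cross: "x \<in> C \<Longrightarrow> y \<notin> C \<Longrightarrow> d x y = N (r x) (s y)"
    and r_nonneg: "x \<in> C \<Longrightarrow> 0 \<le> r x"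
    and s_nonneg: "y \<notin> C \<Longrightarrow> 0 \<le> s y"
    and N_mono: "0 \<le> a \<Longrightarrow> 0 \<le> b \<Longrightarrow> a \<le> u \<Longrightarrow> b \<le> v \<Longrightarrow> N a b \<le> N u v"
begin

abbreviation mixed_VR :: "real \<Rightarrow> 'a set set" where
  "mixed_VR t \<equiv> {\<sigma> \<in> VR t UNIV d. \<sigma> \<inter> C \<noteq> {} \<and> \<sigma> - C \<noteq> {}}"

abbreviation sublevel_join :: "real \<Rightarrow> real \<Rightarrow> real \<Rightarrow> 'a set set" where
  "sublevel_join t u v \<equiv> join (VR t {x \<in> C. r x \<le> u} dC) (VR t {y \<in> - C. s y \<le> v} dY)"

lemma sublevel_join_subset_mixed_VR:
  assumes "N u v \<le> t"
  shows "sublevel_join t u v \<subseteq> mixed_VR t"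
proof
  fix \<sigma> assume "\<sigma> \<in> sublevel_join t u v"
  then obtain a b where \<sigma>: "\<sigma> = a \<union> b" "a \<noteq> {}" "b \<noteq> {}"
    and a: "a \<in> VR t {x \<in> C. r x \<le> u} dC" and b: "b \<in> VR t {y \<in> - C. s y \<le> v} dY"
    unfolding join_def by blast
  have cross_le: "d x y \<le> t" if "x \<in> a" "y \<in> b" for x y
  proof -
    have "x \<in> C" "r x \<le> u" "y \<notin> C" "s y \<le> v"
      using a b that unfolding VR_def by auto
    then have "d x y \<le> N u v"
      using d_cross N_mono r_nonneg s_nonneg by simp
    with assms show ?thesis by simp
  qed
  have "d x y \<le> t" if xy: "x \<in> \<sigma>" "y \<in> \<sigma>" for x y
  proof -
    consider "x \<in> a" "y \<in> a" | "x \<in> a" "y \<in> b" | "x \<in> b" "y \<in> a" | "x \<in> b" "y \<in> b"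
      using xy \<sigma>(1) by blast
    then show ?thesis
    proof cases
      case 1
      then have "x \<in> C" "y \<in> C" "dC x y \<le> t" using a unfolding VR_def by auto
      then show ?thesis by (simp add: d_C)
    next
      case 2
      then show ?thesis by (rule cross_le)
    next
      case 3
      then show ?thesis using cross_le d_sym by metis
    next
      case 4
      then have "x \<notin> C" "y \<notin> C" "dY x y \<le> t" using b unfolding VR_def by auto
      then show ?thesis by (simp add: d_Y)
    qed
  qed
  moreover have "a \<subseteq> C" "b \<subseteq> - C" using a b unfolding VR_def by auto
  ultimately show "\<sigma> \<in> mixed_VR t"
    using a b \<sigma> unfolding VR_def by auto
qed

lemma mixed_VR_in_sublevel_join:
  assumes "\<sigma> \<in> mixed_VR t"
  obtains u v where "0 \<le> u" "0 \<le> v" "N u v \<le> t" "\<sigma> \<in> sublevel_join t u v"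
proof -
  have fin: "finite \<sigma>" and diam: "\<And>x y. x \<in> \<sigma> \<Longrightarrow> y \<in> \<sigma> \<Longrightarrow> d x y \<le> t"
    using assms unfolding VR_def by auto
  define u where "u = Max (r ` (\<sigma> \<inter> C))"
  define v where "v = Max (s ` (\<sigma> - C))"
  have "u \<in> r ` (\<sigma> \<inter> C)" "v \<in> s ` (\<sigma> - C)"
    unfolding u_def v_def using fin assms by (auto intro!: Max_in)
  then obtain x0 y0 where x0: "x0 \<in> \<sigma> \<inter> C" "u = r x0" and y0: "y0 \<in> \<sigma> - C" "v = s y0"
    by blast
  have "0 \<le> u" "0 \<le> v" using x0 y0 r_nonneg s_nonneg by auto
  moreover have "N u v \<le> t" using diam[of x0 y0] d_cross[of x0 y0] x0 y0 by simp
  moreover have "\<sigma> \<inter> C \<in> VR t {x \<in> C. r x \<le> u} dC"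
    using fin assms diam d_C unfolding u_def VR_def by fastforce
  moreover have "\<sigma> - C \<in> VR t {y \<in> - C. s y \<le> v} dY"
    using fin assms diam d_Y unfolding v_def VR_def by fastforce
  moreover have "\<sigma> = (\<sigma> \<inter> C) \<union> (\<sigma> - C)" by blast
  ultimately show ?thesis
    using that assms unfolding join_def by blast
qed

theorem mixed_VR_eq_Union_sublevel_join:
  "mixed_VR t = \<Union>{sublevel_join t u v | u v. 0 \<le> u \<and> 0 \<le> v \<and> N u v \<le> t}"
proof (intro equalityI subsetI)
  fix \<sigma> assume "\<sigma> \<in> mixed_VR t"
  then obtain u v where "0 \<le> u" "0 \<le> v" "N u v \<le> t" "\<sigma> \<in> sublevel_join t u v"
    by (rule mixed_VR_in_sublevel_join)
  then show "\<sigma> \<in> \<Union>{sublevel_join t u v | u v. 0 \<le> u \<and> 0 \<le> v \<and> N u v \<le> t}"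
    by blast
next
  fix \<sigma> assume "\<sigma> \<in> \<Union>{sublevel_join t u v | u v. 0 \<le> u \<and> 0 \<le> v \<and> N u v \<le> t}"
  then obtain u v where "N u v \<le> t" "\<sigma> \<in> sublevel_join t u v"
    by blast
  then show "\<sigma> \<in> mixed_VR t"
    using sublevel_join_subset_mixed_VR by blast
qed

lemma mixed_VR_eq_sublevel_join_max:
  assumes "0 \<le> t" and N_le_iff: "\<And>u v. 0 \<le> u \<Longrightarrow> 0 \<le> v \<Longrightarrow> N u v \<le> t \<longleftrightarrow> u \<le> t \<and> v \<le> t"
  shows "mixed_VR t = sublevel_join t t t"
proof
  show "mixed_VR t \<subseteq> sublevel_join t t t"
  proof
    fix \<sigma> assume "\<sigma> \<in> mixed_VR t"
    then obtain u v where uv: "0 \<le> u" "0 \<le> v" "N u v \<le> t" and "\<sigma> \<in> sublevel_join t u v"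
      by (rule mixed_VR_in_sublevel_join)
    moreover have "sublevel_join t u v \<subseteq> sublevel_join t t t"
      using uv N_le_iff by (intro join_mono VR_mono) auto
    ultimately show "\<sigma> \<in> sublevel_join t t t" by blast
  qed
  show "sublevel_join t t t \<subseteq> mixed_VR t"
    using assms by (intro sublevel_join_subset_mixed_VR) simp
qed

end

theorem theorem6p5:
  fixes C :: "'a set" and \<theta> :: 'a
    and \<beta> :: "'a \<Rightarrow> 'a \<Rightarrow> real"
    and dreg :: "'a option \<Rightarrow> 'a option \<Rightarrow> real"
    and d\<theta> :: "'a \<Rightarrow> 'a \<Rightarrow> real"
    and p :: ereal and t :: real
  assumes p: "1 \<le> p"
    and \<theta>C: "\<theta> \<in> C"
    and \<beta>_metric: "metric_on C \<beta>"
    and dreg_metric: "metric_on (insert None (Some ` (- C))) dreg"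
    and d\<theta>_metric: "metric_on UNIV d\<theta>"
    and d\<theta>_C: "\<And>x y. x \<in> C \<Longrightarrow> y \<in> C \<Longrightarrow> d\<theta> x y = \<beta> x y"
    and d\<theta>_Y: "\<And>x y. x \<notin> C \<Longrightarrow> y \<notin> C \<Longrightarrow> d\<theta> x y = dreg (Some x) (Some y)"
    and d\<theta>_cross: "\<And>x y. x \<in> C \<Longrightarrow> y \<notin> C \<Longrightarrow>
                     d\<theta> x y = lp_norm2 p (\<beta> x \<theta>) (dreg (Some y) None)"
    and t: "0 \<le> t"
  shows "{\<sigma> \<in> VR t UNIV d\<theta>. \<sigma> \<inter> C \<noteq> {} \<and> \<sigma> - C \<noteq> {}} =
           (\<Union>{join (VR t {x \<in> C. \<beta> x \<theta> \<le> u} \<beta>)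
                   (VR t {y \<in> - C. dreg (Some y) None \<le> v} (\<lambda>x y. dreg (Some x) (Some y)))
               | u v. 0 \<le> u \<and> 0 \<le> v \<and> lp_norm2 p u v \<le> t})
       \<and> (p = \<infinity> \<longrightarrow>
           VR t UNIV d\<theta> =
             VR t C \<beta> \<union> VR t (- C) (\<lambda>x y. dreg (Some x) (Some y)) \<union>
             join (VR t {x \<in> C. \<beta> x \<theta> \<le> t} \<beta>)
                  (VR t {y \<in> - C. dreg (Some y) None \<le> t} (\<lambda>x y. dreg (Some x) (Some y))))"
proof -
  interpret glued_distance C d\<theta> \<beta> "\<lambda>x y. dreg (Some x) (Some y)"
    "\<lambda>x. \<beta> x \<theta>" "\<lambda>y. dreg (Some y) None" "lp_norm2 p"
  proof
    show "d\<theta> x y = d\<theta> y x" for x y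
      using d\<theta>_metric unfolding metric_on_def by blast
    show "0 \<le> \<beta> x \<theta>" if "x \<in> C" for x
      using \<beta>_metric \<theta>C that unfolding metric_on_def by blast
    show "0 \<le> dreg (Some y) None" if "y \<notin> C" for y
      using dreg_metric that unfolding metric_on_def by blast
    show "lp_norm2 p a b \<le> lp_norm2 p u v" if "0 \<le> a" "0 \<le> b" "a \<le> u" "b \<le> v" for a b u v
      using lp_norm2_mono[OF p] that by simp
  qed (fact d\<theta>_C d\<theta>_Y d\<theta>_cross)+
  have split: "VR t UNIV d\<theta> = VR t C \<beta> \<union> VR t (- C) (\<lambda>x y. dreg (Some x) (Some y)) \<union> mixed_VR t"
    using d\<theta>_C d\<theta>_Y by (rule VR_UNIV_split)
  show ?thesis
  proof (intro conjI impI)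
    show "mixed_VR t = \<Union>{sublevel_join t u v | u v. 0 \<le> u \<and> 0 \<le> v \<and> lp_norm2 p u v \<le> t}"
      by (rule mixed_VR_eq_Union_sublevel_join)
    assume "p = \<infinity>"
    then have "mixed_VR t = sublevel_join t t t"
      using t by (intro mixed_VR_eq_sublevel_join_max) (auto simp: lp_norm2_infinity_le_iff)
    then show "VR t UNIV d\<theta> = VR t C \<beta> \<union> VR t (- C) (\<lambda>x y. dreg (Some x) (Some y)) \<union> sublevel_join t t t"
      using split by simp
  qed
qed

end
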